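(* Let $s\in\mathbb{R}^2$ with $|s|=1$, $m=s^\perp$, and let $F,G\in\mathcal{M}_s$ with $F=R(\mathbb{I}+\gamma s\otimes m)$, $G=Q(\mathbb{I}+\zeta s\otimes m)$, where $R,Q\in SO(2)$ and $\gamma,\zeta\in\mathbb{R}$. Then $\operatorname{rank}(F-G)=1$ if and only if one of the following holds: (i) $R=Q$ and $\gamma\neq\zeta$; or (ii) $R\neq Q$ and $\gamma-\zeta=2\tan(\theta/2)$, where $\theta\in(-\pi,\pi)$ is the rotation angle of $Q^TR$, i.e. $Q^TRe_1=\cos\theta\, e_1+\sin\theta\, e_2$. Moreover, in case (i), $F-G=(\gamma-\zeta)Rs\otimes m$, and in case (ii), $$F-G=\frac{\gamma-\zeta}{4+(\gamma-\zeta)^2}\,Q\big((\zeta-\gamma)s+2m\big)\otimes\big(2s+(\gamma+\zeta)m\big).$$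
   Context: $m=s^\perp=(-s_2,s_1)$; $\mathcal{M}_s=\{F\in\mathbb{R}^{2\times2}:\det F=1,|Fs|=1\}=\{R(\mathbb{I}+\gamma s\otimes m):R\in SO(2),\gamma\in\mathbb{R}\}$; $a\otimes b=ab^T$. *)

theory Defs
  imports "HOL-Analysis.Analysis"
begin

definition outer :: "real^'n \<Rightarrow> real^'m \<Rightarrow> real^'m^'n" where
  "outer a b = (\<chi> i j. a $ i * b $ j)"

definition perp :: "real^2 \<Rightarrow> real^2" where
  "perp s = vector [- s $ 2, s $ 1]"

definition e1 :: "real^2" where "e1 = vector [1, 0]"
definition e2 :: "real^2" where "e2 = vector [0, 1]"

end

theory Submission
  imports Defs
begin

text \<open>
  Write \<open>S\<^sub>k = I + k s \<otimes> m\<close> and \<open>P = Q\<^sup>T R\<close>. Then \<open>F - G = Q (P S\<^sub>\<gamma> - S\<^sub>\<zeta>)\<close>, and multiplying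
  by the orthogonal matrix \<open>Q\<close> changes neither the rank nor the determinant, so everything is
  decided by the \<open>2\<times>2\<close> matrix \<open>M = P S\<^sub>\<gamma> - S\<^sub>\<zeta>\<close>, which has rank one iff it is nonzero and
  singular. Since both shears fix \<open>s\<close>, \<open>M s = P s - s\<close>, so \<open>M = 0\<close> forces \<open>P = I\<close> and then
  \<open>\<gamma> = \<zeta>\<close>. If \<open>P\<close> rotates by \<open>\<theta>\<close>, then \<open>det M = 2 (1 - cos \<theta>) - sin \<theta> (\<gamma> - \<zeta>)\<close>; for
  \<open>P \<noteq> I\<close> this vanishes exactly at the rational parametrisation
  \<open>(cos \<theta>, sin \<theta>) = ((4 - d\<^sup>2)/(4 + d\<^sup>2), 4d/(4 + d\<^sup>2))\<close> of the unit circle with \<open>d = \<gamma> - \<zeta>\<close>,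
  i.e. at \<open>d = 2 tan (\<theta>/2)\<close>; at that point \<open>M\<close> factors as the stated outer product.
\<close>

lemma matrix_diff_ldistrib: "(A :: 'a::ring_1^'n^'m) ** (B - C) = A ** B - A ** C"
  by (simp add: matrix_matrix_mult_def vec_eq_iff sum_subtractf right_diff_distrib)

lemma matrix_mul_scaleR_outer:
  "(A :: real^'n^'k) ** (c *\<^sub>R outer v w) = c *\<^sub>R outer (A *v v) w"
  by (simp add: outer_def matrix_matrix_mult_def matrix_vector_mult_def vec_eq_iff
      sum_distrib_left sum_distrib_right mult_ac)

lemma rank_orthogonal_matrix_mul:
  fixes A :: "real^'m^'n"
  assumes "orthogonal_matrix Q"
  shows "rank (Q ** A) = rank A"
proof (rule antisym)
  show "rank (Q ** A) \<le> rank A"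
    by (rule rank_mul_le_right)
  have "A = transpose Q ** (Q ** A)"
    using assms by (simp add: orthogonal_matrix_def matrix_mul_assoc)
  then show "rank A \<le> rank (Q ** A)"
    by (metis rank_mul_le_right)
qed

lemma orthogonal_matrix_mult_transpose_mult:
  fixes Q :: "real^'n^'n" and A :: "real^'m^'n"
  assumes "orthogonal_matrix Q"
  shows "Q ** (transpose Q ** A) = A"
  using assms by (simp add: orthogonal_matrix_def matrix_mul_assoc)

lemma orthogonal_matrix_transpose_mult_eq_mat_1_iff:
  fixes Q R :: "real^'n^'n"
  assumes "orthogonal_matrix Q"
  shows "transpose Q ** R = mat 1 \<longleftrightarrow> R = Q"
  by (metis assms orthogonal_matrix_def orthogonal_matrix_mult_transpose_mult matrix_mul_rid)

lemma rotation_matrix_transpose_mult: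
  fixes Q R :: "real^'n^'n"
  assumes "rotation_matrix Q" "rotation_matrix R"
  shows "rotation_matrix (transpose Q ** R)"
  using assms orthogonal_matrix_mul[of "transpose Q" R] by (simp add: rotation_matrix_def det_mul)

lemma norm_vec_2_squared: "(norm (x :: real^2))\<^sup>2 = (x$1)\<^sup>2 + (x$2)\<^sup>2"
  by (simp add: norm_vec_def L2_set_def sum_2)

lemma mat2_eq_iff:
  "(A :: real^2^2) = B \<longleftrightarrow> A$1$1 = B$1$1 \<and> A$1$2 = B$1$2 \<and> A$2$1 = B$2$1 \<and> A$2$2 = B$2$2"
  by (auto simp add: vec_eq_iff forall_2)

lemma rank_eq_1_iff_2x2: "rank (A :: real^2^2) = 1 \<longleftrightarrow> A \<noteq> 0 \<and> det A = 0"
  using rank_bound[of A] det_eq_0_rank[of A] rank_eq_0[of A] by auto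

lemma matrix_vector_mult_e1_eq_iff:
  "(A :: real^2^2) *v e1 = x *\<^sub>R e1 + y *\<^sub>R e2 \<longleftrightarrow> A$1$1 = x \<and> A$2$1 = y"
  by (simp add: e1_def e2_def matrix_vector_mult_def vec_eq_iff forall_2 sum_2)

lemma rotation_matrix_2_entries:
  fixes P :: "real^2^2"
  assumes "rotation_matrix P"
  shows "P$1$2 = - P$2$1" "P$2$2 = P$1$1" "(P$1$1)\<^sup>2 + (P$2$1)\<^sup>2 = 1"
proof -
  have "transpose P ** P = mat 1" and det: "P$1$1 * P$2$2 - P$1$2 * P$2$1 = 1"
    using assms by (auto simp: rotation_matrix_def orthogonal_matrix_def det_2)
  then have "(transpose P ** P)$i$j = mat 1 $ i $ j" for i j
    by simp
  then have cols: "(P$1$1)\<^sup>2 + (P$2$1)\<^sup>2 = 1" "(P$1$2)\<^sup>2 + (P$2$2)\<^sup>2 = 1"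
    "P$1$1 * P$1$2 + P$2$1 * P$2$2 = 0"
    by (auto simp: matrix_matrix_mult_def sum_2 transpose_def mat_def power2_eq_square dest: spec)
  have "(P$1$2 + P$2$1)\<^sup>2 + (P$2$2 - P$1$1)\<^sup>2 = 0"
    using cols det by algebra
  then show "P$1$2 = - P$2$1" "P$2$2 = P$1$1"
    by auto
  show "(P$1$1)\<^sup>2 + (P$2$1)\<^sup>2 = 1"
    by (fact cols(1))
qed

lemma rotation_matrix_2_eq_mat_1_iff:
  fixes P :: "real^2^2"
  assumes "rotation_matrix P"
  shows "P = mat 1 \<longleftrightarrow> P$1$1 = 1"
  using rotation_matrix_2_entries[OF assms] by (auto simp: mat2_eq_iff mat_def)

lemma rotation_matrix_2_fixed_vector:
  fixes P :: "real^2^2"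
  assumes "rotation_matrix P" "P *v v = v" "v \<noteq> 0"
  shows "P = mat 1"
proof -
  note P = rotation_matrix_2_entries[OF assms(1)]
  have fixed: "P$1$1 * v$1 - P$2$1 * v$2 = v$1" "P$2$1 * v$1 + P$1$1 * v$2 = v$2"
    using assms(2) P by (auto simp: vec_eq_iff forall_2 matrix_vector_mult_def sum_2)
  have "((P$1$1 - 1)\<^sup>2 + (P$2$1)\<^sup>2) * ((v$1)\<^sup>2 + (v$2)\<^sup>2)
      = ((P$1$1 - 1) * v$1 - P$2$1 * v$2)\<^sup>2 + (P$2$1 * v$1 + (P$1$1 - 1) * v$2)\<^sup>2"
    by (simp add: power2_eq_square algebra_simps)
  also have "\<dots> = 0"
    using fixed by (simp add: algebra_simps)
  finally have "((P$1$1 - 1)\<^sup>2 + (P$2$1)\<^sup>2) * ((v$1)\<^sup>2 + (v$2)\<^sup>2) = 0" .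
  moreover have "(v$1)\<^sup>2 + (v$2)\<^sup>2 \<noteq> 0"
    using assms(3) by (simp add: vec_eq_iff forall_2)
  ultimately have "P$1$1 = 1"
    by auto
  then show ?thesis
    using rotation_matrix_2_eq_mat_1_iff[OF assms(1)] by blast
qed

lemma tan_half_angle_cos_sin:
  fixes \<theta> d :: real
  assumes "- pi < \<theta>" "\<theta> < pi" and d: "d = 2 * tan (\<theta> / 2)"
  shows "cos \<theta> = (4 - d\<^sup>2) / (4 + d\<^sup>2)" "sin \<theta> = 4 * d / (4 + d\<^sup>2)"
proof -
  define t where "t = tan (\<theta> / 2)"
  have "cos (\<theta> / 2) \<noteq> 0"
    using assms by (intro cos_gt_zero_pi[THEN less_imp_neq, symmetric]) auto
  then have "cos \<theta> = (1 - t\<^sup>2) / (1 + t\<^sup>2)" "sin \<theta> = 2 * t / (1 + t\<^sup>2)"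
    using cos_tan_half[of "\<theta> / 2"] sin_tan_half[of "\<theta> / 2"] by (simp_all add: t_def)
  moreover have "1 + t\<^sup>2 \<noteq> 0"
    using zero_le_power2[of t] by linarith
  ultimately show "cos \<theta> = (4 - d\<^sup>2) / (4 + d\<^sup>2)" "sin \<theta> = 4 * d / (4 + d\<^sup>2)"
    unfolding d t_def[symmetric] by (simp_all add: field_simps power_mult_distrib)
qed

lemma tan_half_angle_parametrization:
  fixes c s d :: real
  shows "(\<exists>\<theta>. - pi < \<theta> \<and> \<theta> < pi \<and> c = cos \<theta> \<and> s = sin \<theta> \<and> d = 2 * tan (\<theta> / 2))
     \<longleftrightarrow> c = (4 - d\<^sup>2) / (4 + d\<^sup>2) \<and> s = 4 * d / (4 + d\<^sup>2)"
proof
  assume "\<exists>\<theta>. - pi < \<theta> \<and> \<theta> < pi \<and> c = cos \<theta> \<and> s = sin \<theta> \<and> d = 2 * tan (\<theta> / 2)"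
  then obtain \<theta> where "- pi < \<theta>" "\<theta> < pi" "c = cos \<theta>" "s = sin \<theta>" "d = 2 * tan (\<theta> / 2)"
    by blast
  then show "c = (4 - d\<^sup>2) / (4 + d\<^sup>2) \<and> s = 4 * d / (4 + d\<^sup>2)"
    using tan_half_angle_cos_sin by simp
next
  assume cs: "c = (4 - d\<^sup>2) / (4 + d\<^sup>2) \<and> s = 4 * d / (4 + d\<^sup>2)"
  define \<theta> where "\<theta> = 2 * arctan (d / 2)"
  have range: "- pi < \<theta>" "\<theta> < pi"
    using arctan_lbound[of "d / 2"] arctan_ubound[of "d / 2"] by (auto simp: \<theta>_def)
  have d: "d = 2 * tan (\<theta> / 2)"
    by (simp add: \<theta>_def tan_arctan)
  with range cs
  show "\<exists>\<theta>. - pi < \<theta> \<and> \<theta> < pi \<and> c = cos \<theta> \<and> s = sin \<theta> \<and> d = 2 * tan (\<theta> / 2)"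
    using tan_half_angle_cos_sin[OF range d] by (intro exI[of _ \<theta>]) simp
qed

lemma unit_circle_chord_iff:
  fixes c s d :: real
  assumes circle: "c\<^sup>2 + s\<^sup>2 = 1" and "c \<noteq> 1"
  shows "2 * (1 - c) = s * d \<longleftrightarrow> c = (4 - d\<^sup>2) / (4 + d\<^sup>2) \<and> s = 4 * d / (4 + d\<^sup>2)"
proof -
  have nz: "4 + d\<^sup>2 \<noteq> 0"
    using zero_le_power2[of d] by linarith
  show ?thesis
  proof
    assume chord: "2 * (1 - c) = s * d"
    have "s \<noteq> 0"
      using assms chord by (auto simp: power2_eq_1_iff)
    have "c * (4 + d\<^sup>2) * s\<^sup>2 = (4 - d\<^sup>2) * s\<^sup>2" "s * (4 + d\<^sup>2) * s\<^sup>2 = 4 * d * s\<^sup>2"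
      using circle chord by algebra+
    then have "c * (4 + d\<^sup>2) = 4 - d\<^sup>2" "s * (4 + d\<^sup>2) = 4 * d"
      using \<open>s \<noteq> 0\<close> by simp_all
    then show "c = (4 - d\<^sup>2) / (4 + d\<^sup>2) \<and> s = 4 * d / (4 + d\<^sup>2)"
      using nz by (simp add: field_simps)
  next
    assume "c = (4 - d\<^sup>2) / (4 + d\<^sup>2) \<and> s = 4 * d / (4 + d\<^sup>2)"
    then have c: "c = (4 - d\<^sup>2) / (4 + d\<^sup>2)" and s: "s = 4 * d / (4 + d\<^sup>2)"
      by auto
    show "2 * (1 - c) = s * d"
      unfolding c s using nz by (simp add: field_simps power2_eq_square)
  qed
qed

definition shear :: "real^2 \<Rightarrow> real \<Rightarrow> real^2^2" where
  "shear s k = mat 1 + k *\<^sub>R outer s (perp s)"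

lemma shear_fixes: "shear s k *v s = s"
  by (simp add: shear_def outer_def perp_def matrix_vector_mult_def mat_def vec_eq_iff forall_2
      sum_2 algebra_simps)

lemma shear_diff: "shear s \<gamma> - shear s \<zeta> = (\<gamma> - \<zeta>) *\<^sub>R outer s (perp s)"
  by (simp add: shear_def scaleR_diff_left)

lemma rotation_shear_diff_entries:
  fixes P :: "real^2^2" and s :: "real^2" and \<gamma> \<zeta> :: real
  assumes "rotation_matrix P"
  defines "M \<equiv> P ** shear s \<gamma> - shear s \<zeta>"
  shows "M$1$1 = P$1$1 - 1 - (\<gamma> * (P$1$1 * s$1 - P$2$1 * s$2) - \<zeta> * s$1) * s$2"
    "M$1$2 = - P$2$1 + (\<gamma> * (P$1$1 * s$1 - P$2$1 * s$2) - \<zeta> * s$1) * s$1"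
    "M$2$1 = P$2$1 - (\<gamma> * (P$2$1 * s$1 + P$1$1 * s$2) - \<zeta> * s$2) * s$2"
    "M$2$2 = P$1$1 - 1 + (\<gamma> * (P$2$1 * s$1 + P$1$1 * s$2) - \<zeta> * s$2) * s$1"
  using rotation_matrix_2_entries[OF assms(1)]
  by (simp_all add: M_def shear_def outer_def perp_def matrix_matrix_mult_def mat_def sum_2
      algebra_simps)

lemma det_rotation_shear_diff:
  fixes P :: "real^2^2"
  assumes "rotation_matrix P" "norm s = 1"
  shows "det (P ** shear s \<gamma> - shear s \<zeta>) = 2 * (1 - P$1$1) - P$2$1 * (\<gamma> - \<zeta>)"
proof -
  have "(s$1)\<^sup>2 + (s$2)\<^sup>2 = 1"
    using assms(2) norm_vec_2_squared[of s] by simp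
  with rotation_matrix_2_entries(3)[OF assms(1)] show ?thesis
    unfolding det_2 rotation_shear_diff_entries[OF assms(1)] by algebra
qed

lemma rotation_shear_diff_eq_0_iff:
  fixes P :: "real^2^2"
  assumes "rotation_matrix P" "s \<noteq> 0"
  shows "P ** shear s \<gamma> - shear s \<zeta> = 0 \<longleftrightarrow> P = mat 1 \<and> \<gamma> = \<zeta>"
proof
  assume M: "P ** shear s \<gamma> - shear s \<zeta> = 0"
  have "P *v s = s"
    using arg_cong[OF M, of "\<lambda>A. A *v s"]
    by (simp add: matrix_vector_mult_diff_rdistrib shear_fixes flip: matrix_vector_mul_assoc)
  then have P: "P = mat 1"
    using rotation_matrix_2_fixed_vector assms by blast
  have "(\<gamma> - \<zeta>) * ((s$1)\<^sup>2 + (s$2)\<^sup>2) = 0"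
    using rotation_shear_diff_entries(2,3)[OF assms(1), of s \<gamma> \<zeta>]
    unfolding M by (simp add: P mat_def) algebra
  moreover have "(s$1)\<^sup>2 + (s$2)\<^sup>2 \<noteq> 0"
    using assms(2) by (simp add: vec_eq_iff forall_2)
  ultimately show "P = mat 1 \<and> \<gamma> = \<zeta>"
    using P by auto
next
  assume "P = mat 1 \<and> \<gamma> = \<zeta>"
  then show "P ** shear s \<gamma> - shear s \<zeta> = 0"
    by simp
qed

lemma rotation_shear_diff_rank_one_form:
  fixes P :: "real^2^2" and s :: "real^2" and \<gamma> \<zeta> \<theta> :: real
  defines "d \<equiv> \<gamma> - \<zeta>"
  assumes "rotation_matrix P" "norm s = 1"
    and "- pi < \<theta>" "\<theta> < pi" "P *v e1 = cos \<theta> *\<^sub>R e1 + sin \<theta> *\<^sub>R e2"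
    and "d = 2 * tan (\<theta> / 2)"
  shows "P ** shear s \<gamma> - shear s \<zeta> = (d / (4 + d\<^sup>2)) *\<^sub>R
    outer ((\<zeta> - \<gamma>) *\<^sub>R s + 2 *\<^sub>R perp s) (2 *\<^sub>R s + (\<gamma> + \<zeta>) *\<^sub>R perp s)"
    (is "?M = (d / ?k) *\<^sub>R outer ?v ?w")
proof -
  have nz: "?k \<noteq> 0"
    using zero_le_power2[of d] by linarith
  define c n x y where "c = P$1$1" and "n = P$2$1" and "x = s$1" and "y = s$2"
  note vars = c_def n_def x_def y_def
  have "c = (4 - d\<^sup>2) / ?k" "n = 4 * d / ?k"
    using assms(6) tan_half_angle_cos_sin[OF assms(4,5,7)]
    by (simp_all add: vars matrix_vector_mult_e1_eq_iff)
  then have ck: "c * ?k = 4 - d\<^sup>2" and nk: "n * ?k = 4 * d"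
    using nz by simp_all
  have unit: "x\<^sup>2 + y\<^sup>2 = 1"
    using assms(3) norm_vec_2_squared[of s] by (simp add: vars)
  note M = rotation_shear_diff_entries[OF assms(2), of s \<gamma> \<zeta>, folded vars]
  have v: "?v$1 = (\<zeta> - \<gamma>) * x - 2 * y" "?v$2 = (\<zeta> - \<gamma>) * y + 2 * x"
    and w: "?w$1 = 2 * x - (\<gamma> + \<zeta>) * y" "?w$2 = 2 * y + (\<gamma> + \<zeta>) * x"
    by (simp_all add: perp_def vars)
  have "?M$1$1 * ?k = d * (?v$1 * ?w$1)" "?M$1$2 * ?k = d * (?v$1 * ?w$2)"
    "?M$2$1 * ?k = d * (?v$2 * ?w$1)" "?M$2$2 * ?k = d * (?v$2 * ?w$2)"
    using ck nk unit unfolding M v w d_def by algebra+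
  then have "?M$i$j * ?k = d * (?v$i * ?w$j)" for i j
    using exhaust_2[of i] exhaust_2[of j] by fastforce
  then show ?thesis
    using nz by (simp add: vec_eq_iff outer_def field_simps)
qed

lemma rank_rotation_shear_diff_eq_1_iff:
  fixes P :: "real^2^2" and s :: "real^2" and \<gamma> \<zeta> :: real
  defines "d \<equiv> \<gamma> - \<zeta>"
  assumes P: "rotation_matrix P" and s: "norm s = 1"
  shows "rank (P ** shear s \<gamma> - shear s \<zeta>) = 1 \<longleftrightarrow>
    (P = mat 1 \<and> \<gamma> \<noteq> \<zeta>) \<or>
    (P \<noteq> mat 1 \<and> (\<exists>\<theta>. - pi < \<theta> \<and> \<theta> < pi \<and>
      P *v e1 = cos \<theta> *\<^sub>R e1 + sin \<theta> *\<^sub>R e2 \<and> d = 2 * tan (\<theta> / 2)))"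
proof -
  have "s \<noteq> 0"
    using s by auto
  have "rank (P ** shear s \<gamma> - shear s \<zeta>) = 1 \<longleftrightarrow>
      \<not> (P = mat 1 \<and> \<gamma> = \<zeta>) \<and> 2 * (1 - P$1$1) = P$2$1 * d"
    unfolding rank_eq_1_iff_2x2 det_rotation_shear_diff[OF P s]
      rotation_shear_diff_eq_0_iff[OF P \<open>s \<noteq> 0\<close>] d_def by auto
  moreover have "P$1$1 \<noteq> 1" if "P \<noteq> mat 1"
    using that rotation_matrix_2_eq_mat_1_iff[OF P] by blast
  moreover have "(\<exists>\<theta>. - pi < \<theta> \<and> \<theta> < pi \<and>
      P *v e1 = cos \<theta> *\<^sub>R e1 + sin \<theta> *\<^sub>R e2 \<and> d = 2 * tan (\<theta> / 2))
    \<longleftrightarrow> P$1$1 = (4 - d\<^sup>2) / (4 + d\<^sup>2) \<and> P$2$1 = 4 * d / (4 + d\<^sup>2)"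
    unfolding matrix_vector_mult_e1_eq_iff tan_half_angle_parametrization[symmetric] by blast
  ultimately show ?thesis
    using unit_circle_chord_iff[OF rotation_matrix_2_entries(3)[OF P]]
    by (cases "P = mat 1") (auto simp: mat_def)
qed

theorem lemma3p1:
  fixes s :: "real^2" and R Q :: "real^2^2" and \<gamma> \<zeta> :: real
  assumes "norm s = 1"
    and "rotation_matrix R" and "rotation_matrix Q"
  defines "m \<equiv> perp s"
  defines "F \<equiv> R ** (mat 1 + \<gamma> *\<^sub>R outer s m)"
  defines "G \<equiv> Q ** (mat 1 + \<zeta> *\<^sub>R outer s m)"
  shows "(rank (F - G) = 1 \<longleftrightarrow>
            ((R = Q \<and> \<gamma> \<noteq> \<zeta>) \<or>
             (R \<noteq> Q \<and> (\<exists>\<theta>. - pi < \<theta> \<and> \<theta> < pi \<and>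
                 (transpose Q ** R) *v e1 = cos \<theta> *\<^sub>R e1 + sin \<theta> *\<^sub>R e2 \<and>
                 \<gamma> - \<zeta> = 2 * tan (\<theta> / 2)))))
       \<and> ((R = Q \<and> \<gamma> \<noteq> \<zeta>) \<longrightarrow> F - G = (\<gamma> - \<zeta>) *\<^sub>R outer (R *v s) m)
       \<and> (\<forall>\<theta>. (R \<noteq> Q \<and> - pi < \<theta> \<and> \<theta> < pi \<and>
                 (transpose Q ** R) *v e1 = cos \<theta> *\<^sub>R e1 + sin \<theta> *\<^sub>R e2 \<and>
                 \<gamma> - \<zeta> = 2 * tan (\<theta> / 2)) \<longrightarrow>
            F - G = ((\<gamma> - \<zeta>) / (4 + (\<gamma> - \<zeta>)^2)) *\<^sub>R
                    outer (Q *v ((\<zeta> - \<gamma>) *\<^sub>R s + 2 *\<^sub>R m)) (2 *\<^sub>R s + (\<gamma> + \<zeta>) *\<^sub>R m))"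
proof -
  define P where "P = transpose Q ** R"
  have Q: "orthogonal_matrix Q"
    using assms(3) by (simp add: rotation_matrix_def)
  have P: "rotation_matrix P"
    unfolding P_def using assms(3,2) by (rule rotation_matrix_transpose_mult)
  have RQ: "R = Q \<longleftrightarrow> P = mat 1"
    unfolding P_def using Q by (rule orthogonal_matrix_transpose_mult_eq_mat_1_iff[symmetric])
  have FG: "F - G = Q ** (P ** shear s \<gamma> - shear s \<zeta>)"
    using orthogonal_matrix_mult_transpose_mult[OF Q, of R]
    by (simp add: F_def G_def m_def shear_def P_def matrix_mul_assoc matrix_diff_ldistrib)
  have "rank (F - G) = rank (P ** shear s \<gamma> - shear s \<zeta>)"
    unfolding FG using Q by (rule rank_orthogonal_matrix_mul)
  moreover have "F - G = (\<gamma> - \<zeta>) *\<^sub>R outer (R *v s) m" if "R = Q"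
    using that RQ by (simp add: FG m_def shear_diff matrix_mul_scaleR_outer)
  moreover have "F - G = ((\<gamma> - \<zeta>) / (4 + (\<gamma> - \<zeta>)^2)) *\<^sub>R
      outer (Q *v ((\<zeta> - \<gamma>) *\<^sub>R s + 2 *\<^sub>R m)) (2 *\<^sub>R s + (\<gamma> + \<zeta>) *\<^sub>R m)"
    if "- pi < \<theta>" "\<theta> < pi" "P *v e1 = cos \<theta> *\<^sub>R e1 + sin \<theta> *\<^sub>R e2"
      "\<gamma> - \<zeta> = 2 * tan (\<theta> / 2)" for \<theta>
    using rotation_shear_diff_rank_one_form[OF P assms(1) that]
    by (simp add: FG m_def matrix_mul_scaleR_outer)
  ultimately show ?thesis
    using rank_rotation_shear_diff_eq_1_iff[OF P assms(1)] RQ by (simp flip: P_def)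
qed

end
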